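(* Let $q\ge2$, let $0<R<1$ and let $l$ be an integer with $l>\frac{2}{1-R}$. Then there exist a sequence $n_i\to\infty$ and, for each $i$, a deterministic IDF code over $l$ blocks for $\Pi^q_{n_i}$ with $M_i\ge 2^{q^{R l n_i}}$ messages, type-I error probability $0$ and type-II error probability $\lambda_{2,i}$, such that $\lambda_{2,i}\to0$.
   Context: Fix an integer $q\ge 2$, $\mathcal A_q=\{1,\dots,q\}$. For $n\ge1$ and $\sigma\in S_n$, $\sigma\mathbf x=(x_{\sigma^{-1}(1)},\dots,x_{\sigma^{-1}(n)})$ for $\mathbf x\in\mathcal A_q^n$; the $n$-block $q$-ary uniform permutation channel $\Pi^q_n$ has input/output alphabet $\mathcal A_q^n$ and $\Pi^q_n(\mathbf y\mid\mathbf x)=\frac1{n!}\sum_{\sigma\in S_n}\mathbf 1\{\mathbf y=\sigma\mathbf x\}$. An identification-feedback (IDF) code over $l$ blocks with $M$ messages for $\Pi^q_n$ (with block-wise noiseless feedback) is a family $\{(\mathbb Q_{i,1},\dots,\mathbb Q_{i,l},\mathcal D_i)\}_{i=1}^M$ where $\mathbb Q_{i,j}(\mathbf x^{(j)}\mid \mathbf y^{(1)},\dots,\mathbf y^{(j-1)},\mathbf x^{(1)},\dots,\mathbf x^{(j-1)})$ is a conditional probability distribution on $\mathcal A_q^n$ given the previous output blocks (fed back) and previous input blocks, and $\mathcal D_i\subseteq(\mathcal A_q^n)^l$. When message $i$ is sent, the blocks have joint law $\mathbb P^{(i)}(\underline{\mathbf x},\underline{\mathbf y})=\prod_{j=1}^l\mathbb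 Q_{i,j}(\mathbf x^{(j)}\mid\mathbf y^{(1)},\dots,\mathbf y^{(j-1)},\mathbf x^{(1)},\dots,\mathbf x^{(j-1)})\,\Pi^q_n(\mathbf y^{(j)}\mid\mathbf x^{(j)})$. The code is deterministic if each $\mathbb Q_{i,j}$ is a point mass given by a function $\mathbf f_{i,j}$ of the past blocks. Error probabilities: $\lambda_{i\to j}=\mathbb P^{(i)}(\underline{\mathbf y}\in\mathcal D_j)$ for $i\ne j$, $\lambda_{i\not\to i}=\mathbb P^{(i)}(\underline{\mathbf y}\notin\mathcal D_i)$, type-I error $\lambda_1=\max_i\lambda_{i\not\to i}$, type-II error $\lambda_2=\max_{i\neq j}\lambda_{i\to j}$. *)

theory Defs
  imports "HOL-Analysis.Analysis" "HOL-Combinatorics.Permutations"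
begin

definition blocks :: "nat \<Rightarrow> nat \<Rightarrow> nat list set" where
  "blocks q n = {x. length x = n \<and> set x \<subseteq> {1..q}}"

definition block_seqs :: "nat \<Rightarrow> nat \<Rightarrow> nat \<Rightarrow> nat list list set" where
  "block_seqs q n l = {xs. length xs = l \<and> set xs \<subseteq> blocks q n}"

text \<open>sigma x = (x_{sigma^-1(1)},...,x_{sigma^-1(n)}), i.e. position i receives x ! (inv sigma i).\<close>
definition perm_act :: "(nat \<Rightarrow> nat) \<Rightarrow> nat list \<Rightarrow> nat list" where
  "perm_act \<sigma> x = permute_list (inv \<sigma>) x"

definition perm_chan :: "nat \<Rightarrow> nat list \<Rightarrow> nat list \<Rightarrow> real" where
  "perm_chan n y x =
     real (card {\<sigma>. \<sigma> permutes {..<n} \<and> y = perm_act \<sigma> x}) / real (fact n)"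

text \<open>A deterministic IDF code: encoders f i j ys xs (message i in {1..M}, block j in {0..<l},
  ys / xs the previous j output / input blocks) and decoding sets D i.\<close>
definition is_det_idf_code ::
  "nat \<Rightarrow> nat \<Rightarrow> nat \<Rightarrow> nat \<Rightarrow> (nat \<Rightarrow> nat \<Rightarrow> nat list list \<Rightarrow> nat list list \<Rightarrow> nat list)
     \<Rightarrow> (nat \<Rightarrow> nat list list set) \<Rightarrow> bool" where
  "is_det_idf_code q n l M f D \<longleftrightarrow>
     (\<forall>i\<in>{1..M}. \<forall>j<l. \<forall>ys xs. length ys = j \<and> length xs = j \<and>
         set ys \<subseteq> blocks q n \<and> set xs \<subseteq> blocks q n \<longrightarrow> f i j ys xs \<in> blocks q n)
   \<and> (\<forall>i\<in>{1..M}. D i \<subseteq> block_seqs q n l)"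

definition idf_joint ::
  "nat \<Rightarrow> (nat \<Rightarrow> nat \<Rightarrow> nat list list \<Rightarrow> nat list list \<Rightarrow> nat list) \<Rightarrow> nat
     \<Rightarrow> nat list list \<Rightarrow> nat list list \<Rightarrow> real" where
  "idf_joint n f i xs ys =
     (\<Prod>j<length xs. (if xs ! j = f i j (take j ys) (take j xs) then 1 else 0)
                     * perm_chan n (ys ! j) (xs ! j))"

definition idf_prob ::
  "nat \<Rightarrow> nat \<Rightarrow> nat \<Rightarrow> (nat \<Rightarrow> nat \<Rightarrow> nat list list \<Rightarrow> nat list list \<Rightarrow> nat list) \<Rightarrow> nat
     \<Rightarrow> nat list list set \<Rightarrow> real" where
  "idf_prob q n l f i A =
     (\<Sum>xs\<in>block_seqs q n l. \<Sum>ys\<in>block_seqs q n l \<inter> A. idf_joint n f i xs ys)"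

definition idf_type1 ::
  "nat \<Rightarrow> nat \<Rightarrow> nat \<Rightarrow> nat \<Rightarrow> (nat \<Rightarrow> nat \<Rightarrow> nat list list \<Rightarrow> nat list list \<Rightarrow> nat list)
     \<Rightarrow> (nat \<Rightarrow> nat list list set) \<Rightarrow> real" where
  "idf_type1 q n l M f D = Max {idf_prob q n l f i (- D i) | i. i \<in> {1..M}}"

definition idf_type2 ::
  "nat \<Rightarrow> nat \<Rightarrow> nat \<Rightarrow> nat \<Rightarrow> (nat \<Rightarrow> nat \<Rightarrow> nat list list \<Rightarrow> nat list list \<Rightarrow> nat list)
     \<Rightarrow> (nat \<Rightarrow> nat list list set) \<Rightarrow> real" where
  "idf_type2 q n l M f D =
     Max {idf_prob q n l f i (D k) | i k. i \<in> {1..M} \<and> k \<in> {1..M} \<and> i \<noteq> k}"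

end

theory Submission
  imports Defs "HOL-Combinatorics.Multiset_Permutations"
begin

text \<open>
  The sender spends the first l - 1 blocks on one fixed block x0 whose type class P is large,
  |P| \<ge> q^n / (n + 1)^q. The channel outputs, seen by both sides through the feedback, are then
  a uniformly random word u \<in> P^(l-1). Message i sends in the last block a block of weight G i u,
  which the permutation channel cannot change, and the receiver accepts i iff it sees that weight.
  Hence type-I errors never occur, and the type-II error of (i, k) is the fraction of the words u on
  which the tags G i and G k agree. For n = 2^m - 1, a greedy Gilbert-Varshamov argument gives
  2^|P^(l-1)| tag functions with pairwise agreement at most 2/m, and
  |P|^(l-1) \<ge> q^((l-2)n) \<ge> q^(R l n) once l > 2 / (1 - R).
\<close>

section \<open>The uniform permutation channel\<close>

lemma mset_perm_act: "\<sigma> permutes {..<length x} \<Longrightarrow> mset (perm_act \<sigma> x) = mset x"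
  by (simp add: perm_act_def permutes_inv)

lemma perm_act_compose:
  assumes "\<sigma> permutes {..<length x}" "\<tau> permutes {..<length x}"
  shows "perm_act (\<tau> \<circ> \<sigma>) x = perm_act \<tau> (perm_act \<sigma> x)"
proof -
  have "inv (\<tau> \<circ> \<sigma>) = inv \<sigma> \<circ> inv \<tau>"
    using assms by (simp add: o_inv_distrib permutes_bij)
  then show ?thesis
    using assms permute_list_compose[of "inv \<tau>" x "inv \<sigma>"] by (simp add: perm_act_def permutes_inv)
qed

lemma mset_eq_perm_act:
  assumes "mset y = mset x"
  obtains \<sigma> where "\<sigma> permutes {..<length x}" "perm_act \<sigma> x = y"
proof -
  obtain p where "p permutes {..<length x}" "permute_list p x = y"
    using mset_eq_permutation[OF assms] .
  then show thesis
    using that[of "inv p"] by (simp add: perm_act_def permutes_inv permutes_inv_inv)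
qed

definition transporters :: "nat \<Rightarrow> nat list \<Rightarrow> nat list \<Rightarrow> (nat \<Rightarrow> nat) set" where
  "transporters n x y = {\<sigma>. \<sigma> permutes {..<n} \<and> y = perm_act \<sigma> x}"

lemma perm_chan_transporters: "perm_chan n y x = real (card (transporters n x y)) / fact n"
  by (simp add: perm_chan_def transporters_def)

lemma finite_transporters [simp]: "finite (transporters n x y)"
  unfolding transporters_def
  by (rule finite_subset[OF _ finite_permutations[of "{..<n}"]]) auto

lemma card_transporters_le:
  assumes "length x = n" "\<tau> permutes {..<n}"
  shows "card (transporters n x y) \<le> card (transporters n x (perm_act \<tau> y))"
proof (rule card_inj_on_le)
  show "inj_on ((\<circ>) \<tau>) (transporters n x y)"
    using permutes_inj[OF assms(2)] by (auto intro!: inj_onI simp: fun_eq_iff inj_eq)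
  show "(\<circ>) \<tau> ` transporters n x y \<subseteq> transporters n x (perm_act \<tau> y)"
    using assms by (auto simp: transporters_def perm_act_compose permutes_compose)
qed simp

lemma card_transporters_eq:
  assumes "length x = n" "mset y = mset x"
  shows "card (transporters n x y) = card (transporters n x x)"
proof -
  obtain \<tau> where \<tau>: "\<tau> permutes {..<n}" "perm_act \<tau> x = y"
    using mset_eq_perm_act[OF assms(2)] assms(1) by blast
  have "perm_act (inv \<tau>) y = x"
    using \<tau> assms(1) perm_act_compose[of \<tau> x "inv \<tau>"]
    by (simp add: permutes_inv permutes_inv_o(2) perm_act_def)
  then show ?thesis
    using card_transporters_le[OF assms(1) \<tau>(1), of x]
      card_transporters_le[OF assms(1) permutes_inv[OF \<tau>(1)], of y] \<tau>(2) by simp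
qed

lemma card_permutations_of_multiset_mult_transporters:
  assumes "length x = n"
  shows "card (permutations_of_multiset (mset x)) * card (transporters n x x) = fact n"
proof -
  have "fact n = card {\<sigma>. \<sigma> permutes {..<n}}"
    by (simp add: card_permutations)
  also have "\<dots> = card (\<Union>y\<in>permutations_of_multiset (mset x). transporters n x y)"
    using assms by (intro arg_cong[where f = card])
      (auto simp: transporters_def permutations_of_multiset_def mset_perm_act)
  also have "\<dots> = (\<Sum>y\<in>permutations_of_multiset (mset x). card (transporters n x y))"
    by (rule card_UN_disjoint) (simp, simp, auto simp: transporters_def)
  also have "\<dots> = (\<Sum>y\<in>permutations_of_multiset (mset x). card (transporters n x x))"
    using assms by (intro sum.cong refl card_transporters_eq)
      (auto simp: permutations_of_multiset_def)
  finally show ?thesis by simp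
qed

lemma perm_chan_eq:
  assumes "length x = n"
  shows "perm_chan n y x =
           (if mset y = mset x then 1 / real (card (permutations_of_multiset (mset x))) else 0)"
proof (cases "mset y = mset x")
  case True
  have "id \<in> transporters n x x"
    by (simp add: transporters_def perm_act_def)
  then have "card (transporters n x x) \<noteq> 0"
    by (auto simp: card_eq_0_iff)
  moreover have "(fact n :: real) =
      real (card (permutations_of_multiset (mset x))) * real (card (transporters n x x))"
    by (metis card_permutations_of_multiset_mult_transporters[OF assms] of_nat_fact of_nat_mult)
  ultimately show ?thesis
    using True by (simp add: perm_chan_transporters card_transporters_eq[OF assms True])
next
  case False
  then have "transporters n x y = {}"
    using assms by (auto simp: transporters_def mset_perm_act)
  then show ?thesis
    using False by (simp add: perm_chan_transporters)
qed

lemma perm_chan_nonneg: "perm_chan n y x \<ge> 0"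
  by (simp add: perm_chan_def)

section \<open>Blocks and type classes\<close>

lemma finite_blocks [simp]: "finite (blocks q n)"
  unfolding blocks_def using finite_lists_length_eq[of "{1..q}" n] by (simp add: conj_commute)

lemma card_blocks: "card (blocks q n) = q ^ n"
  unfolding blocks_def using card_lists_length_eq[of "{1..q}" n] by (simp add: conj_commute)

lemma finite_block_seqs [simp]: "finite (block_seqs q n l)"
  unfolding block_seqs_def using finite_lists_length_eq[of "blocks q n" l]
  by (simp add: conj_commute)

lemma sum_block_seqs_Suc:
  "(\<Sum>ys\<in>block_seqs q n (Suc r). F ys) = (\<Sum>u\<in>block_seqs q n r. \<Sum>y\<in>blocks q n. F (u @ [y]))"
proof -
  have "block_seqs q n (Suc r) = (\<lambda>(u, y). u @ [y]) ` (block_seqs q n r \<times> blocks q n)"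
    by (auto simp: block_seqs_def length_Suc_conv_rev image_iff)
  moreover have "inj_on (\<lambda>(u, y). u @ [y]) (block_seqs q n r \<times> blocks q n)"
    by (auto intro: inj_onI)
  ultimately show ?thesis
    by (simp add: sum.reindex sum.cartesian_product split_def)
qed

lemma blocks_mset_eq:
  assumes "x \<in> blocks q n"
  shows "{y \<in> blocks q n. mset y = mset x} = permutations_of_multiset (mset x)"
  using assms
  by (auto simp: blocks_def permutations_of_multiset_def dest: mset_eq_setD mset_eq_length)

lemma sum_perm_chan_type_class:
  assumes x: "x \<in> blocks q n"
  shows "(\<Sum>y\<in>blocks q n. if mset y = mset z then perm_chan n y x else 0) =
           (if mset z = mset x then 1 else 0)"
proof (cases "mset z = mset x")
  case True
  let ?P = "permutations_of_multiset (mset x)"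
  have lx: "length x = n"
    using x by (simp add: blocks_def)
  have "(\<Sum>y\<in>blocks q n. if mset y = mset z then perm_chan n y x else 0) = (\<Sum>y\<in>?P. perm_chan n y x)"
    using True by (simp flip: sum.inter_filter add: blocks_mset_eq[OF x])
  also have "\<dots> = (\<Sum>y\<in>?P. 1 / card ?P)"
    by (intro sum.cong) (auto simp: perm_chan_eq[OF lx] permutations_of_multiset_def)
  also have "\<dots> = 1"
    by (simp add: card_eq_0_iff)
  finally show ?thesis
    using True by simp
next
  case False
  then show ?thesis
    using x by (intro trans[OF sum.neutral]) (auto simp: perm_chan_eq blocks_def)
qed

lemma prod_perm_chan_type_class:
  assumes "length x = n" "length u = r"
  shows "(\<Prod>j<r. perm_chan n (u ! j) x) =
           (if set u \<subseteq> permutations_of_multiset (mset x)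
            then 1 / real (card (permutations_of_multiset (mset x))) ^ r else 0)"
proof (cases "set u \<subseteq> permutations_of_multiset (mset x)")
  case True
  have "mset (u ! j) = mset x" if "j < r" for j
    using True that assms(2) nth_mem[of j u] by (blast dest: permutations_of_multisetD)
  then have "(\<Prod>j<r. perm_chan n (u ! j) x) =
      (\<Prod>j<r. 1 / real (card (permutations_of_multiset (mset x))))"
    using assms(1) by (intro prod.cong refl) (simp add: perm_chan_eq)
  then show ?thesis
    using True by (simp add: power_one_over)
next
  case False
  then obtain j where "j < r" "u ! j \<notin> permutations_of_multiset (mset x)"
    using assms(2) by (metis in_set_conv_nth subsetI)
  then show ?thesis
    using False assms(1)
    by (auto simp: perm_chan_eq permutations_of_multiset_def intro!: prod_zero bexI[of _ j])
qed

lemma card_mset_blocks_le: "card (mset ` blocks q n) \<le> (n + 1) ^ q"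
proof -
  let ?cnt = "\<lambda>A. restrict (count A) {1..q}"
  have inj: "inj_on ?cnt (mset ` blocks q n)"
  proof (rule inj_onI)
    fix A B assume "A \<in> mset ` blocks q n" "B \<in> mset ` blocks q n" "?cnt A = ?cnt B"
    then show "A = B"
      by (intro multiset_eqI) (auto simp: blocks_def fun_eq_iff split: if_splits,
          metis atLeastAtMost_iff count_mset_0_iff subsetD)
  qed
  have "?cnt (mset x) \<in> {1..q} \<rightarrow>\<^sub>E {0..n}" if "x \<in> blocks q n" for x
    using that count_le_size[of "mset x"] by (auto simp: blocks_def)
  then have "?cnt ` mset ` blocks q n \<subseteq> {1..q} \<rightarrow>\<^sub>E {0..n}"
    by blast
  with inj have "card (mset ` blocks q n) \<le> card ({1..q} \<rightarrow>\<^sub>E {0..n})"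
    by (intro card_inj_on_le) (simp_all add: finite_PiE)
  then show ?thesis
    by (simp add: card_PiE)
qed

lemma exists_large_fibre:
  assumes "finite A" "A \<noteq> {}"
  obtains x where "x \<in> A" "card A \<le> card (f ` A) * card {y \<in> A. f y = f x}"
proof -
  define g where "g b = card {y \<in> A. f y = b}" for b
  have fin: "finite (g ` f ` A)"
    using assms(1) by simp
  have "Max (g ` f ` A) \<in> g ` f ` A"
    using fin assms(2) by (intro Max_in) auto
  then obtain x where x: "x \<in> A" "Max (g ` f ` A) = g (f x)"
    by blast
  have "card A = (\<Sum>b\<in>f ` A. g b)"
    using sum.image_gen[OF assms(1), of "\<lambda>_. 1 :: nat" f] by (simp add: g_def)
  also have "\<dots> \<le> card (f ` A) * g (f x)"
  proof -
    have "g b \<le> g (f x)" if "b \<in> f ` A" for b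
      using Max_ge[OF fin] x(2) that by (metis image_eqI)
    then show ?thesis
      using sum_bounded_above[of "f ` A" g] by simp
  qed
  finally show thesis
    using that x(1) unfolding g_def by blast
qed

lemma exists_large_type_class:
  assumes "q \<ge> 1"
  obtains x where "x \<in> blocks q n" "q ^ n \<le> card (permutations_of_multiset (mset x)) * (n + 1) ^ q"
proof -
  have "blocks q n \<noteq> {}"
    using assms card_blocks[of q n] by force
  then obtain x where x: "x \<in> blocks q n"
    and large: "card (blocks q n) \<le>
      card (mset ` blocks q n) * card {y \<in> blocks q n. mset y = mset x}"
    using exists_large_fibre[of "blocks q n" mset] by auto
  have "q ^ n \<le> card (mset ` blocks q n) * card (permutations_of_multiset (mset x))"
    using large by (simp add: card_blocks blocks_mset_eq[OF x])
  also have "\<dots> \<le> (n + 1) ^ q * card (permutations_of_multiset (mset x))"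
    using card_mset_blocks_le by (rule mult_le_mono1)
  finally show thesis
    using that x by (simp add: mult.commute)
qed

section \<open>Families of functions with small pairwise agreement\<close>

lemma exists_independent_subset:
  assumes "finite X"
    and "\<And>x. x \<in> X \<Longrightarrow> card {y \<in> X. C x y} \<le> d"
    and "\<And>x y. C x y \<longleftrightarrow> C y x" and "\<And>x. C x x"
  shows "\<exists>S\<subseteq>X. (\<forall>a\<in>S. \<forall>b\<in>S. a \<noteq> b \<longrightarrow> \<not> C a b) \<and> card X \<le> card S * d"
  using assms(1,2)
proof (induction X rule: finite_psubset_induct)
  case (psubset X)
  show ?case
  proof (cases "X = {}")
    case False
    then obtain x where x: "x \<in> X"
      by blast
    define X' where "X' = X - {y \<in> X. C x y}"
    have smaller: "X' \<subset> X"
      using x assms(4) by (auto simp: X'_def)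
    have degree: "card {y \<in> X'. C z y} \<le> d" if "z \<in> X'" for z
    proof -
      have "card {y \<in> X'. C z y} \<le> card {y \<in> X. C z y}"
        using psubset.hyps(1) by (intro card_mono) (auto simp: X'_def)
      also have "\<dots> \<le> d"
        using psubset.prems that by (simp add: X'_def)
      finally show ?thesis .
    qed
    obtain S' where S': "S' \<subseteq> X'" "\<forall>a\<in>S'. \<forall>b\<in>S'. a \<noteq> b \<longrightarrow> \<not> C a b"
      "card X' \<le> card S' * d"
      using psubset.IH[OF smaller degree] by blast
    have "x \<notin> S'"
      using S'(1) assms(4) by (auto simp: X'_def)
    have "finite S'"
      using S'(1) psubset.hyps(1) by (auto simp: X'_def dest: finite_subset)
    have "X = X' \<union> {y \<in> X. C x y}"
      by (auto simp: X'_def)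
    then have "card X \<le> card X' + card {y \<in> X. C x y}"
      by (metis card_Un_le)
    also have "\<dots> \<le> card (insert x S') * d"
      using S'(3) psubset.prems[OF x] \<open>x \<notin> S'\<close> \<open>finite S'\<close> by simp
    finally have "card X \<le> card (insert x S') * d" .
    moreover have "insert x S' \<subseteq> X"
      using S'(1) x by (auto simp: X'_def)
    moreover have "\<not> C a b" if "a \<in> insert x S'" "b \<in> insert x S'" "a \<noteq> b" for a b
      using that S'(1,2) assms(3)[of a b] by (auto simp: X'_def)
    ultimately show ?thesis
      by blast
  qed simp
qed

lemma card_agreeing_functions_le:
  assumes "finite U" "t \<le> card U"
  shows "card {g \<in> U \<rightarrow>\<^sub>E {..<K}. t \<le> card {u \<in> U. g u = f u}} \<le> 2 ^ card U * K ^ (card U - t)"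
proof -
  define I where "I = {T. T \<subseteq> U \<and> card T = t}"
  define A where "A T = {g \<in> U \<rightarrow>\<^sub>E {..<K}. \<forall>u\<in>T. g u = f u}" for T
  have finI: "finite I"
    using assms(1) by (auto simp: I_def)
  have card_A: "card (A T) \<le> K ^ (card U - t)" if "T \<in> I" for T
  proof -
    have T: "T \<subseteq> U" "card T = t"
      using that by (auto simp: I_def)
    let ?ext = "\<lambda>\<phi> u. if u \<in> T then f u else \<phi> u"
    have "A T \<subseteq> ?ext ` ((U - T) \<rightarrow>\<^sub>E {..<K})"
    proof
      fix g assume g: "g \<in> A T"
      have "g u = ?ext (restrict g (U - T)) u" for u
        using g T(1) PiE_arb[of g U _ u] by (auto simp: A_def)
      then have "g = ?ext (restrict g (U - T))"
        by blast
      moreover have "restrict g (U - T) \<in> (U - T) \<rightarrow>\<^sub>E {..<K}"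
        using g by (auto simp: A_def)
      ultimately show "g \<in> ?ext ` ((U - T) \<rightarrow>\<^sub>E {..<K})"
        by blast
    qed
    then have "card (A T) \<le> card (?ext ` ((U - T) \<rightarrow>\<^sub>E {..<K}))"
      using assms(1) by (intro card_mono) (simp_all add: finite_PiE)
    also have "\<dots> \<le> card ((U - T) \<rightarrow>\<^sub>E {..<K})"
      using assms(1) by (intro card_image_le) (simp add: finite_PiE)
    also have "\<dots> = K ^ (card U - t)"
      using T assms(1) by (simp add: card_PiE card_Diff_subset finite_subset)
    finally show ?thesis .
  qed
  have "{g \<in> U \<rightarrow>\<^sub>E {..<K}. t \<le> card {u \<in> U. g u = f u}} \<subseteq> (\<Union>T\<in>I. A T)"
  proof
    fix g assume g: "g \<in> {g \<in> U \<rightarrow>\<^sub>E {..<K}. t \<le> card {u \<in> U. g u = f u}}"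
    then obtain T where "T \<subseteq> {u \<in> U. g u = f u}" "card T = t"
      using obtain_subset_with_card_n by blast
    then show "g \<in> (\<Union>T\<in>I. A T)"
      using g unfolding I_def A_def by blast
  qed
  then have "card {g \<in> U \<rightarrow>\<^sub>E {..<K}. t \<le> card {u \<in> U. g u = f u}} \<le> card (\<Union>T\<in>I. A T)"
    by (rule card_mono[rotated]) (auto simp: A_def finI assms(1) finite_PiE)
  also have "\<dots> \<le> (\<Sum>T\<in>I. card (A T))"
    using finI by (rule card_UN_le)
  also have "\<dots> \<le> card I * K ^ (card U - t)"
    using sum_bounded_above[of I "\<lambda>T. card (A T)"] card_A by simp
  also have "card I \<le> 2 ^ card U"
    using card_mono[of "Pow U" I] assms(1) by (auto simp: I_def card_Pow)
  finally show ?thesis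
    by simp
qed

lemma exists_low_agreement_code:
  assumes "finite U" "t \<le> card U" "K > 0"
  obtains S where "S \<subseteq> U \<rightarrow>\<^sub>E {..<K}"
    "\<And>g h. g \<in> S \<Longrightarrow> h \<in> S \<Longrightarrow> g \<noteq> h \<Longrightarrow> card {u \<in> U. g u = h u} < t"
    "K ^ t \<le> card S * 2 ^ card U"
proof -
  define C where "C g h \<longleftrightarrow> t \<le> card {u \<in> U. h u = g u}" for g h :: "'a \<Rightarrow> nat"
  have agree_sym: "{u \<in> U. h u = g u} = {u \<in> U. g u = h u}" for g h :: "'a \<Rightarrow> nat"
    by auto
  have "\<exists>S\<subseteq>U \<rightarrow>\<^sub>E {..<K}. (\<forall>g\<in>S. \<forall>h\<in>S. g \<noteq> h \<longrightarrow> \<not> C g h) \<and>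
          card (U \<rightarrow>\<^sub>E {..<K}) \<le> card S * (2 ^ card U * K ^ (card U - t))"
  proof (rule exists_independent_subset)
    show "card {h \<in> U \<rightarrow>\<^sub>E {..<K}. C g h} \<le> 2 ^ card U * K ^ (card U - t)" for g
      unfolding C_def using card_agreeing_functions_le[OF assms(1,2)] .
    show "C g h \<longleftrightarrow> C h g" for g h
      unfolding C_def by (subst agree_sym) (rule refl)
  qed (use assms(1,2) in \<open>simp_all add: C_def finite_PiE\<close>)
  then obtain S where S: "S \<subseteq> U \<rightarrow>\<^sub>E {..<K}" "\<forall>g\<in>S. \<forall>h\<in>S. g \<noteq> h \<longrightarrow> \<not> C g h"
    and card_S: "card (U \<rightarrow>\<^sub>E {..<K}) \<le> card S * (2 ^ card U * K ^ (card U - t))"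
    by blast
  have "K ^ t * K ^ (card U - t) = card (U \<rightarrow>\<^sub>E {..<K})"
    using assms(1,2) by (simp add: card_PiE flip: power_add)
  also note card_S
  finally have "K ^ t \<le> card S * 2 ^ card U"
    using assms(3) by (simp add: mult.assoc)
  moreover have "card {u \<in> U. g u = h u} < t" if "g \<in> S" "h \<in> S" "g \<noteq> h" for g h
    using S(2) that by (simp add: C_def agree_sym not_le)
  ultimately show thesis
    using that S(1) by blast
qed

lemma exists_low_agreement_tags:
  fixes U :: "'a set"
  assumes fin_U: "finite U" and "U \<noteq> {}" and m: "3 \<le> m" and n: "n + 1 = 2 ^ m"
  obtains M :: nat and G :: "nat \<Rightarrow> 'a \<Rightarrow> nat"
  where "2 ^ card U \<le> M" "\<And>i u. G i u \<le> n"
    "\<And>i k. i \<in> {1..M} \<Longrightarrow> k \<in> {1..M} \<Longrightarrow> i \<noteq> k \<Longrightarrow> m * card {u \<in> U. G i u = G k u} \<le> 2 * card U"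
proof -
  define t where "t = 2 * card U div m + 1"
  have "card U > 0"
    using fin_U assms(2) by (simp add: card_gt_0_iff)
  then have t_le: "t \<le> card U"
    using m by (simp add: t_def Suc_le_eq div_less_iff_less_mult)
  have "m * t = 2 * card U div m * m + m"
    by (simp add: t_def algebra_simps)
  then have t_gt: "2 * card U < m * t"
    using m mod_less_divisor[of m "2 * card U"] div_mult_mod_eq[of "2 * card U" m] by linarith
  obtain S where S: "S \<subseteq> U \<rightarrow>\<^sub>E {..<(2::nat) ^ m}"
    and agree: "\<And>g h. g \<in> S \<Longrightarrow> h \<in> S \<Longrightarrow> g \<noteq> h \<Longrightarrow> card {u \<in> U. g u = h u} < t"
    and card_S: "((2::nat) ^ m) ^ t \<le> card S * 2 ^ card U"
    by (rule exists_low_agreement_code[OF fin_U t_le, of "2 ^ m"]) simp_all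
  have "2 ^ card U * 2 ^ card U = (2::nat) ^ (card U + card U)"
    by (simp add: power_add)
  also have "\<dots> \<le> 2 ^ (m * t)"
    using t_gt by (intro power_increasing) auto
  also have "\<dots> \<le> card S * 2 ^ card U"
    unfolding power_mult by (rule card_S)
  finally have size: "2 ^ card U \<le> card S"
    by simp
  have "finite S"
    by (rule finite_subset[OF S]) (simp add: fin_U finite_PiE)
  then obtain h where h: "bij_betw h {1..card S} S"
    by (rule ex_bij_betw_nat_finite_1[THEN exE])
  define G where "G i u = min (h i u) n" for i u
  have low: "m * card {u \<in> U. G i u = G k u} \<le> 2 * card U"
    if "i \<in> {1..card S}" "k \<in> {1..card S}" "i \<noteq> k" for i k
  proof -
    have hS: "h i \<in> S" "h k \<in> S" "h i \<noteq> h k"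
      using that bij_betw_apply[OF h] inj_on_contraD[OF bij_betw_imp_inj_on[OF h]] by auto
    then have bounds: "h i u < n + 1" "h k u < n + 1" if "u \<in> U" for u
      using S that n by (auto simp: PiE_iff subset_iff)
    have "G i u = h i u" "G k u = h k u" if "u \<in> U" for u
      using bounds[OF that] by (simp_all add: G_def)
    then have "{u \<in> U. G i u = G k u} = {u \<in> U. h i u = h k u}"
      by auto
    then have "card {u \<in> U. G i u = G k u} \<le> 2 * card U div m"
      using agree[OF hS] by (simp add: t_def)
    then have "m * card {u \<in> U. G i u = G k u} \<le> m * (2 * card U div m)"
      by (rule mult_le_mono2)
    also have "\<dots> \<le> 2 * card U"
      by (simp add: div_times_less_eq_dividend mult.commute)
    finally show ?thesis .
  qed
  have G: "G i u \<le> n" for i u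
    by (simp add: G_def)
  show thesis
    by (rule that[OF size G low])
qed

section \<open>Error probabilities of IDF codes\<close>

lemma idf_joint_nonneg: "idf_joint n f i xs ys \<ge> 0"
  by (simp add: idf_joint_def perm_chan_nonneg prod_nonneg)

lemma idf_prob_nonneg: "idf_prob q n l f i A \<ge> 0"
  by (simp add: idf_prob_def idf_joint_nonneg sum_nonneg)

lemma idf_type1_eq_0:
  assumes "M \<ge> 1" "\<And>i. i \<in> {1..M} \<Longrightarrow> idf_prob q n l f i (- D i) = 0"
  shows "idf_type1 q n l M f D = 0"
proof -
  have "{idf_prob q n l f i (- D i) | i. i \<in> {1..M}} = {0}"
    using assms by force
  then show ?thesis
    by (simp add: idf_type1_def)
qed

lemma finite_idf_type2_values:
  "finite {idf_prob q n l f i (D k) | i k. i \<in> {1..M} \<and> k \<in> {1..M} \<and> i \<noteq> k}"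
proof (rule finite_subset)
  show "{idf_prob q n l f i (D k) | i k. i \<in> {1..M} \<and> k \<in> {1..M} \<and> i \<noteq> k}
      \<subseteq> (\<lambda>(i, k). idf_prob q n l f i (D k)) ` ({1..M} \<times> {1..M})"
    by auto
qed simp

lemma idf_prob_le_idf_type2:
  "i \<in> {1..M} \<Longrightarrow> k \<in> {1..M} \<Longrightarrow> i \<noteq> k \<Longrightarrow> idf_prob q n l f i (D k) \<le> idf_type2 q n l M f D"
  unfolding idf_type2_def by (rule Max_ge[OF finite_idf_type2_values]) blast

lemma idf_type2_nonneg: "2 \<le> M \<Longrightarrow> 0 \<le> idf_type2 q n l M f D"
  using idf_prob_le_idf_type2[of 1 M 2 q n l f D] idf_prob_nonneg[of q n l f 1 "D 2"] by simp

lemma idf_type2_le: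
  assumes "2 \<le> M"
    and "\<And>i k. i \<in> {1..M} \<Longrightarrow> k \<in> {1..M} \<Longrightarrow> i \<noteq> k \<Longrightarrow> idf_prob q n l f i (D k) \<le> b"
  shows "idf_type2 q n l M f D \<le> b"
proof -
  have "idf_prob q n l f 1 (D 2) \<in>
      {idf_prob q n l f i (D k) | i k. i \<in> {1..M} \<and> k \<in> {1..M} \<and> i \<noteq> k}"
    using assms(1) by force
  then show ?thesis
    unfolding idf_type2_def using assms(2) by (subst Max_le_iff[OF finite_idf_type2_values]) auto
qed

lemma idf_prob_feedback_encoder:
  assumes f: "\<And>j ys xs. f i j ys xs = g j ys"
    and g: "\<And>ys. ys \<in> block_seqs q n l \<Longrightarrow> map (\<lambda>j. g j (take j ys)) [0..<l] \<in> block_seqs q n l"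
  shows "idf_prob q n l f i A =
           (\<Sum>ys\<in>block_seqs q n l \<inter> A. \<Prod>j<l. perm_chan n (ys ! j) (g j (take j ys)))"
proof -
  define inputs where "inputs ys = map (\<lambda>j. g j (take j ys)) [0..<l]" for ys
  define law where "law ys = (\<Prod>j<l. perm_chan n (ys ! j) (g j (take j ys)))" for ys
  have joint: "idf_joint n f i xs ys = (if xs = inputs ys then law ys else 0)"
    if "length xs = l" for xs ys
  proof (cases "xs = inputs ys")
    case True
    then show ?thesis
      by (simp add: idf_joint_def f inputs_def law_def)
  next
    case False
    have "\<exists>j<l. xs ! j \<noteq> g j (take j ys)"
    proof (rule ccontr)
      assume "\<not> ?thesis"
      then have "xs = inputs ys"
        using that by (intro nth_equalityI) (auto simp: inputs_def)
      with False show False ..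
    qed
    then obtain j where "j < l" "xs ! j \<noteq> g j (take j ys)"
      by blast
    then have "idf_joint n f i xs ys = 0"
      using that by (auto simp: idf_joint_def f intro!: prod_zero bexI[of _ j])
    then show ?thesis
      using False by simp
  qed
  have "idf_prob q n l f i A =
      (\<Sum>ys\<in>block_seqs q n l \<inter> A. \<Sum>xs\<in>block_seqs q n l. idf_joint n f i xs ys)"
    unfolding idf_prob_def by (rule sum.swap)
  also have "\<dots> =
      (\<Sum>ys\<in>block_seqs q n l \<inter> A. \<Sum>xs\<in>block_seqs q n l. if xs = inputs ys then law ys else 0)"
    by (intro sum.cong refl joint) (simp add: block_seqs_def)
  also have "\<dots> = (\<Sum>ys\<in>block_seqs q n l \<inter> A. law ys)"
    using g by (intro sum.cong refl) (simp add: sum.delta' inputs_def)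
  finally show ?thesis
    by (simp add: law_def)
qed

section \<open>The tag code\<close>

definition weight_block :: "nat \<Rightarrow> nat \<Rightarrow> nat list" where
  "weight_block n a = replicate a 1 @ replicate (n - a) 2"

lemma weight_block_in_blocks: "a \<le> n \<Longrightarrow> 2 \<le> q \<Longrightarrow> weight_block n a \<in> blocks q n"
  by (auto simp: weight_block_def blocks_def)

lemma length_weight_block: "a \<le> n \<Longrightarrow> length (weight_block n a) = n"
  by (simp add: weight_block_def)

lemma mset_weight_block_eq_iff: "mset (weight_block n a) = mset (weight_block n b) \<longleftrightarrow> a = b"
proof
  assume "mset (weight_block n a) = mset (weight_block n b)"
  then have "count (mset (weight_block n a)) 1 = count (mset (weight_block n b)) 1"
    by simp
  then show "a = b"
    by (simp add: weight_block_def count_mset filter_replicate)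
qed simp

definition tag_encoder ::
  "nat \<Rightarrow> nat \<Rightarrow> nat list \<Rightarrow> (nat \<Rightarrow> nat list list \<Rightarrow> nat)
     \<Rightarrow> nat \<Rightarrow> nat \<Rightarrow> nat list list \<Rightarrow> nat list list \<Rightarrow> nat list" where
  "tag_encoder n r x0 G i j ys xs = (if j < r then x0 else weight_block n (G i ys))"

definition tag_decoder ::
  "nat \<Rightarrow> nat \<Rightarrow> nat \<Rightarrow> (nat \<Rightarrow> nat list list \<Rightarrow> nat) \<Rightarrow> nat \<Rightarrow> nat list list set" where
  "tag_decoder q n r G i =
     {ys \<in> block_seqs q n (Suc r). mset (ys ! r) = mset (weight_block n (G i (take r ys)))}"

lemma is_det_idf_code_tag:
  assumes "2 \<le> q" "x0 \<in> blocks q n" "\<And>i u. G i u \<le> n"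
  shows "is_det_idf_code q n (Suc r) M (tag_encoder n r x0 G) (tag_decoder q n r G)"
  using assms weight_block_in_blocks
  by (auto simp: is_det_idf_code_def tag_encoder_def tag_decoder_def)

lemma idf_prob_tag_encoder:
  assumes "2 \<le> q" "x0 \<in> blocks q n" "\<And>i u. G i u \<le> n"
  shows "idf_prob q n (Suc r) (tag_encoder n r x0 G) i A =
           (\<Sum>ys\<in>block_seqs q n (Suc r) \<inter> A.
              (\<Prod>j<r. perm_chan n (ys ! j) x0) *
              perm_chan n (ys ! r) (weight_block n (G i (take r ys))))"
proof -
  have "idf_prob q n (Suc r) (tag_encoder n r x0 G) i A =
      (\<Sum>ys\<in>block_seqs q n (Suc r) \<inter> A.
         \<Prod>j<Suc r. perm_chan n (ys ! j) (tag_encoder n r x0 G i j (take j ys) []))"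
    by (rule idf_prob_feedback_encoder)
      (use assms weight_block_in_blocks in \<open>auto simp: block_seqs_def tag_encoder_def\<close>)
  also have "\<dots> = (\<Sum>ys\<in>block_seqs q n (Suc r) \<inter> A.
      (\<Prod>j<r. perm_chan n (ys ! j) x0) * perm_chan n (ys ! r) (weight_block n (G i (take r ys))))"
    by (intro sum.cong refl) (auto simp: tag_encoder_def intro!: prod.cong)
  finally show ?thesis .
qed

lemma idf_prob_tag_decoder_compl:
  assumes "2 \<le> q" "x0 \<in> blocks q n" "\<And>i u. G i u \<le> n"
  shows "idf_prob q n (Suc r) (tag_encoder n r x0 G) i (- tag_decoder q n r G i) = 0"
  unfolding idf_prob_tag_encoder[OF assms]
  using assms(3)
  by (intro sum.neutral) (auto simp: tag_decoder_def perm_chan_eq length_weight_block)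

lemma idf_prob_tag_decoder:
  assumes "2 \<le> q" "x0 \<in> blocks q n" "\<And>i u. G i u \<le> n"
  defines "P \<equiv> permutations_of_multiset (mset x0)"
  shows "idf_prob q n (Suc r) (tag_encoder n r x0 G) i (tag_decoder q n r G k) =
           real (card {u. set u \<subseteq> P \<and> length u = r \<and> G i u = G k u}) / real (card P) ^ r"
proof -
  define a where "a u = (\<Prod>j<r. perm_chan n (u ! j) x0)" for u
  define w where "w i u = weight_block n (G i u)" for i u
  have lx0: "length x0 = n"
    using assms(2) by (simp add: blocks_def)
  have w: "w i u \<in> blocks q n" for i u
    using assms(1,3) by (simp add: w_def weight_block_in_blocks)
  have "idf_prob q n (Suc r) (tag_encoder n r x0 G) i (tag_decoder q n r G k) =
      (\<Sum>ys\<in>block_seqs q n (Suc r).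
         if mset (ys ! r) = mset (w k (take r ys))
         then a ys * perm_chan n (ys ! r) (w i (take r ys)) else 0)"
    unfolding idf_prob_tag_encoder[OF assms(1-3)] sum.inter_restrict[OF finite_block_seqs]
    by (intro sum.cong refl) (simp add: tag_decoder_def a_def w_def)
  also have "\<dots> = (\<Sum>u\<in>block_seqs q n r. a u *
      (\<Sum>y\<in>blocks q n. if mset y = mset (w k u) then perm_chan n y (w i u) else 0))"
    unfolding sum_block_seqs_Suc sum_distrib_left
    by (intro sum.cong refl) (auto simp: block_seqs_def a_def nth_append)
  also have "\<dots> =
      (\<Sum>u\<in>block_seqs q n r. if set u \<subseteq> P \<and> G i u = G k u then 1 / real (card P) ^ r else 0)"
    by (intro sum.cong refl)
      (auto simp: sum_perm_chan_type_class[OF w] w_def mset_weight_block_eq_iff a_def P_def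
        prod_perm_chan_type_class[OF lx0] block_seqs_def)
  also have "\<dots> = real (card {u \<in> block_seqs q n r. set u \<subseteq> P \<and> G i u = G k u}) / real (card P) ^ r"
    by (simp flip: sum.inter_filter)
  also have "{u \<in> block_seqs q n r. set u \<subseteq> P \<and> G i u = G k u} =
      {u. set u \<subseteq> P \<and> length u = r \<and> G i u = G k u}"
    using blocks_mset_eq[OF assms(2)] by (auto simp: block_seqs_def P_def)
  finally show ?thesis .
qed

lemma idf_type2_tag_code_le:
  fixes a :: real
  assumes "2 \<le> q" "x0 \<in> blocks q n" "\<And>i u. G i u \<le> n" "2 \<le> M"
    and "\<And>i k. i \<in> {1..M} \<Longrightarrow> k \<in> {1..M} \<Longrightarrow> i \<noteq> k \<Longrightarrow>
           real (card {u. set u \<subseteq> permutations_of_multiset (mset x0) \<and> length u = r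
                          \<and> G i u = G k u}) \<le> a"
  shows "idf_type2 q n (Suc r) M (tag_encoder n r x0 G) (tag_decoder q n r G)
           \<le> a / real (card (permutations_of_multiset (mset x0))) ^ r"
  using assms(4)
proof (rule idf_type2_le)
  fix i k assume "i \<in> {1..M}" "k \<in> {1..M}" "i \<noteq> k"
  then show "idf_prob q n (Suc r) (tag_encoder n r x0 G) i (tag_decoder q n r G k)
      \<le> a / real (card (permutations_of_multiset (mset x0))) ^ r"
    using assms(5) by (simp add: idf_prob_tag_decoder[OF assms(1-3)] divide_right_mono)
qed

lemma exists_tag_code:
  assumes q: "2 \<le> q" and m: "3 \<le> m" and n: "n + 1 = 2 ^ m" and x0: "x0 \<in> blocks q n"
  shows "\<exists>M f D. is_det_idf_code q n (Suc r) M f D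
           \<and> 2 ^ (card (permutations_of_multiset (mset x0)) ^ r) \<le> M
           \<and> idf_type1 q n (Suc r) M f D = 0
           \<and> 0 \<le> idf_type2 q n (Suc r) M f D \<and> idf_type2 q n (Suc r) M f D \<le> 2 / m"
proof -
  define P where "P = permutations_of_multiset (mset x0)"
  define U where "U = {u. set u \<subseteq> P \<and> length u = r}"
  have fin_U: "finite U"
    by (simp add: U_def P_def finite_lists_length_eq)
  have "card P > 0"
    by (simp add: P_def card_gt_0_iff)
  then have card_U: "card U = card P ^ r" "card U \<ge> 1"
    using card_lists_length_eq[of P r] by (simp_all add: U_def P_def Suc_le_eq)
  have "U \<noteq> {}"
    using card_U(2) by (intro notI) simp
  obtain M :: nat and G where size: "2 ^ card U \<le> M" and G: "\<And>i u. G i u \<le> n"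
    and agree: "\<And>i k. i \<in> {1..M} \<Longrightarrow> k \<in> {1..M} \<Longrightarrow> i \<noteq> k \<Longrightarrow>
                  m * card {u \<in> U. G i u = G k u} \<le> 2 * card U"
    by (rule exists_low_agreement_tags[OF fin_U \<open>U \<noteq> {}\<close> m n]) blast
  have "(2::nat) ^ 1 \<le> 2 ^ card U"
    using card_U(2) by (intro power_increasing) auto
  with size have M2: "2 \<le> M"
    by simp
  have "real (card {u. set u \<subseteq> P \<and> length u = r \<and> G i u = G k u}) \<le> 2 * card U / m"
    if "i \<in> {1..M}" "k \<in> {1..M}" "i \<noteq> k" for i k
  proof -
    have "m * card {u. set u \<subseteq> P \<and> length u = r \<and> G i u = G k u} \<le> 2 * card U"
      using agree[OF that] by (simp add: U_def conj_assoc)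
    then have "real (m * card {u. set u \<subseteq> P \<and> length u = r \<and> G i u = G k u}) \<le> real (2 * card U)"
      by (rule of_nat_mono)
    then show ?thesis
      using m by (simp add: pos_le_divide_eq mult.commute)
  qed
  then have "idf_type2 q n (Suc r) M (tag_encoder n r x0 G) (tag_decoder q n r G) \<le> 2 / m"
    using idf_type2_tag_code_le[where G = G and r = r and a = "2 * real (card U) / real m",
        OF q x0 G M2] card_U
    by (simp add: P_def)
  moreover have "idf_type1 q n (Suc r) M (tag_encoder n r x0 G) (tag_decoder q n r G) = 0"
    using M2 by (intro idf_type1_eq_0 idf_prob_tag_decoder_compl[OF q x0 G]) simp
  ultimately show ?thesis
    using is_det_idf_code_tag[OF q x0 G] size card_U(1) idf_type2_nonneg[OF M2]
    by (intro exI[of _ M] exI[of _ "tag_encoder n r x0 G"] exI[of _ "tag_decoder q n r G"])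
      (simp add: P_def)
qed

section \<open>Rates\<close>

lemma square_le_exp2: "4 \<le> m \<Longrightarrow> m * m \<le> (2::nat) ^ m"
proof (induction m rule: dec_induct)
  case (step k)
  have "4 * k \<le> k * k"
    using step.hyps(1) by (rule mult_le_mono1)
  moreover have "Suc k * Suc k = k * k + 2 * k + 1"
    by simp
  ultimately have "Suc k * Suc k \<le> 2 * (k * k)"
    using step.hyps(1) by linarith
  then show ?case
    using step.IH by simp
qed simp

lemma rate_of_large_type_class:
  fixes q n m r c :: nat and R :: real
  assumes q: "2 \<le> q" and r: "1 \<le> r" and R: "R * real (Suc r) \<le> real r - 1"
    and large: "q ^ n \<le> c * 2 ^ (m * q)" and n: "m * q * r \<le> n"
  shows "2 powr (real q powr (R * real (Suc r) * real n)) \<le> 2 ^ (c ^ r)"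
proof -
  have "q ^ ((r - 1) * n) * q ^ n = (q ^ n) ^ r"
    using r by (simp flip: power_add power_mult add: algebra_simps)
  also have "\<dots> \<le> (c * 2 ^ (m * q)) ^ r"
    using large by (rule power_mono) simp
  also have "\<dots> = c ^ r * 2 ^ (m * q * r)"
    by (simp add: power_mult_distrib power_mult)
  also have "\<dots> \<le> c ^ r * q ^ n"
    using n q order_trans[OF power_increasing[of "m * q * r" n 2] power_mono[of 2 q n]]
    by (intro mult_left_mono) auto
  finally have "q ^ ((r - 1) * n) \<le> c ^ r"
    using q by simp
  have "R * real (Suc r) * real n \<le> real ((r - 1) * n)"
    using R r by (simp add: of_nat_diff mult_right_mono)
  then have "real q powr (R * real (Suc r) * real n) \<le> real q powr real ((r - 1) * n)"
    using q by (intro powr_mono) auto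
  also have "\<dots> = real (q ^ ((r - 1) * n))"
    using q by (subst powr_realpow) auto
  also have "\<dots> \<le> real (c ^ r)"
    using \<open>q ^ ((r - 1) * n) \<le> c ^ r\<close> by (simp only: of_nat_le_iff)
  finally have "2 powr (real q powr (R * real (Suc r) * real n)) \<le> 2 powr real (c ^ r)"
    by simp
  also have "\<dots> = 2 ^ (c ^ r)"
    by (subst powr_realpow) simp_all
  finally show ?thesis .
qed

definition idf_code_achieving ::
  "nat \<Rightarrow> nat \<Rightarrow> nat \<Rightarrow> real \<Rightarrow> real \<Rightarrow> nat \<Rightarrow> (nat \<Rightarrow> nat \<Rightarrow> nat list list \<Rightarrow> nat list list \<Rightarrow> nat list)
     \<Rightarrow> (nat \<Rightarrow> nat list list set) \<Rightarrow> bool" where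
  "idf_code_achieving q n l R \<epsilon> M f D \<longleftrightarrow>
     is_det_idf_code q n l M f D \<and> 2 powr (real q powr (R * real l * real n)) \<le> real M
     \<and> idf_type1 q n l M f D = 0 \<and> 0 \<le> idf_type2 q n l M f D \<and> idf_type2 q n l M f D \<le> \<epsilon>"

lemma exists_idf_code_at_scale:
  fixes q l m :: nat and R :: real
  assumes q: "2 \<le> q" and l: "3 \<le> l" and R: "R * real l \<le> real l - 2"
    and m: "4 \<le> m" "q * (l - 1) < m"
  shows "\<exists>M f D. idf_code_achieving q (2 ^ m - 1) l R (2 / m) M f D"
proof -
  define n :: nat where "n = 2 ^ m - 1"
  define r where "r = l - 1"
  have l_eq: "l = Suc r" "1 \<le> r"
    using l by (simp_all add: r_def)
  have n: "n + 1 = 2 ^ m"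
    by (simp add: n_def)
  obtain x0 where x0: "x0 \<in> blocks q n"
    and large: "q ^ n \<le> card (permutations_of_multiset (mset x0)) * 2 ^ (m * q)"
    using exists_large_type_class[of q n] q unfolding n power_mult by auto
  have "m * q * r < m * m"
    using m by (simp add: r_def mult.assoc)
  then have "m * q * r \<le> n"
    using square_le_exp2[OF m(1)] n by linarith
  then have rate: "2 powr (real q powr (R * real l * real n)) \<le>
      2 ^ (card (permutations_of_multiset (mset x0)) ^ r)"
    using rate_of_large_type_class[OF q l_eq(2) _ large] R l_eq(1) by simp
  have "3 \<le> m"
    using m(1) by simp
  then obtain M f D where code: "is_det_idf_code q n (Suc r) M f D"
    and size: "2 ^ (card (permutations_of_multiset (mset x0)) ^ r) \<le> M"
    and errors: "idf_type1 q n (Suc r) M f D = 0" "0 \<le> idf_type2 q n (Suc r) M f D"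
      "idf_type2 q n (Suc r) M f D \<le> 2 / m"
    using exists_tag_code[OF q _ n x0, of r] by blast
  have "2 powr (real q powr (R * real l * real n)) \<le> real M"
    using rate size by (metis of_nat_le_iff of_nat_numeral of_nat_power order_trans)
  then show ?thesis
    using code errors unfolding idf_code_achieving_def n_def[symmetric] l_eq(1) by blast
qed

lemma filterlim_exp2_minus_one_at_top: "filterlim (\<lambda>i. 2 ^ (i + k) - 1 :: nat) at_top at_top"
proof (rule filterlim_at_top_mono[OF filterlim_ident])
  have "i \<le> 2 ^ (i + k) - 1" for i
  proof -
    have "i < 2 ^ i"
      by (rule less_exp)
    also have "\<dots> \<le> 2 ^ (i + k)"
      by (rule power_increasing) simp_all
    finally show ?thesis
      by linarith
  qed
  then show "\<forall>\<^sub>F i in sequentially. i \<le> 2 ^ (i + k) - 1"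
    by (intro always_eventually allI)
qed

lemma rate_condition:
  assumes "0 < R" "R < 1" "real l > 2 / (1 - R)"
  shows "R * real l \<le> real l - 2" "3 \<le> l"
proof -
  have "2 < real l * (1 - R)"
    using assms(2,3) by (simp add: divide_less_eq)
  moreover have "0 \<le> R * real l"
    using assms(1) by simp
  ultimately show "R * real l \<le> real l - 2" "3 \<le> l"
    by (simp_all add: algebra_simps)
qed

theorem theorem3:
  fixes q l :: nat and R :: real
  assumes "q \<ge> 2" and "0 < R" and "R < 1" and "real l > 2 / (1 - R)"
  shows "\<exists>(ns :: nat \<Rightarrow> nat) (M :: nat \<Rightarrow> nat)
            (f :: nat \<Rightarrow> nat \<Rightarrow> nat \<Rightarrow> nat list list \<Rightarrow> nat list list \<Rightarrow> nat list)
            (D :: nat \<Rightarrow> nat \<Rightarrow> nat list list set).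
     filterlim ns at_top at_top
   \<and> (\<forall>i. is_det_idf_code q (ns i) l (M i) (f i) (D i)
          \<and> real (M i) \<ge> 2 powr (real q powr (R * real l * real (ns i)))
          \<and> idf_type1 q (ns i) l (M i) (f i) (D i) = 0)
   \<and> (\<lambda>i. idf_type2 q (ns i) l (M i) (f i) (D i)) \<longlonglongrightarrow> 0"
proof -
  define m0 where "m0 = q * (l - 1) + 4"
  define ns :: "nat \<Rightarrow> nat" where "ns i = 2 ^ (i + m0) - 1" for i
  have "\<forall>i. \<exists>M f D. idf_code_achieving q (ns i) l R (2 / real (i + m0)) M f D"
    unfolding ns_def m0_def using rate_condition[OF assms(2-4)]
    by (intro allI exists_idf_code_at_scale[OF assms(1)]) auto
  then obtain M f D
    where codes: "\<forall>i. idf_code_achieving q (ns i) l R (2 / real (i + m0)) (M i) (f i) (D i)"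
    by (simp only: choice_iff) blast
  have "(\<lambda>i. idf_type2 q (ns i) l (M i) (f i) (D i)) \<longlonglongrightarrow> 0"
  proof (rule tendsto_sandwich[OF _ _ tendsto_const])
    show "(\<lambda>i. 2 / real (i + m0)) \<longlonglongrightarrow> 0"
      using LIMSEQ_ignore_initial_segment[OF lim_const_over_n[of 2], of m0] by simp
  qed (use codes in \<open>auto simp: idf_code_achieving_def\<close>)
  moreover have "filterlim ns at_top at_top"
    unfolding ns_def by (rule filterlim_exp2_minus_one_at_top)
  ultimately show ?thesis
    using codes unfolding idf_code_achieving_def by blast
qed

end
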